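(* Let $G_S(z)=\frac{N_S(z)}{D_S(z)}$ and $G_T(z)=\frac{N_T(z)}{D_T(z)}$ be rational transfer functions (in the forward shift operator $z$) of two discrete-time, single-input single-output, linear time-invariant systems (the source system and the target system), each written with coprime real polynomials and nonzero numerator. Assume both $G_S$ and $G_T$ are BIBO stable, and assume $G_S$ is minimum-phase. Then there exists a causal, BIBO stable rational transfer function $G_\alpha(z)$ achieving perfect transfer learning from the source to the target system, i.e. such that $G_\alpha(z)G_S(z)=G_T(z)$ (equivalently, for every bounded input $d$, feeding the source output $y_s$ into $G_\alpha$ yields exactly the target output $y_t$), if and only if the relative degree of $G_S$ is less than or equal to the relative degree of $G_T$.
   Context: For a rational transfer function $G(z)=N(z)/D(z)$ with coprime polynomials $N,D$, the relative degree is $\deg D-\deg N$. $G$ is causal if its relative degree is $\geq 0$. $G$ is BIBO stable if all roots of $D(z)$ lie in the open unit disk. $G$ is called minimum-phase if both $G$ and its inverse dynamics $1/G$ are BIBO stable, i.e. all roots of both $D(z)$ and $N(z)$ lie in the open unit disk. Perfect transfer learning means the transfer learning error $e=y_t-y_{TL}$ is identically zero for every bounded input, where $y_{TL}$ is the output of the map driven by $y_s$. *)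

theory Defs
  imports Complex_Main "HOL-Computational_Algebra.Polynomial_Factorial"
begin

text \<open>A rational transfer function G(z) = N(z)/D(z) is represented by the pair (N, D)
  of real polynomials, written with coprime N, D and D nonzero.\<close>

definition is_tf :: "real poly \<Rightarrow> real poly \<Rightarrow> bool" where
  "is_tf N D \<longleftrightarrow> D \<noteq> 0 \<and> coprime N D"

definition rel_deg :: "real poly \<Rightarrow> real poly \<Rightarrow> int" where
  "rel_deg N D = int (degree D) - int (degree N)"

definition causal_tf :: "real poly \<Rightarrow> real poly \<Rightarrow> bool" where
  "causal_tf N D \<longleftrightarrow> rel_deg N D \<ge> 0"

definition bibo_stable :: "real poly \<Rightarrow> real poly \<Rightarrow> bool" where
  "bibo_stable N D \<longleftrightarrow> (\<forall>z::complex. poly (map_poly complex_of_real D) z = 0 \<longrightarrow> cmod z < 1)"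

definition min_phase :: "real poly \<Rightarrow> real poly \<Rightarrow> bool" where
  "min_phase N D \<longleftrightarrow> bibo_stable N D \<and> bibo_stable D N"

end

theory Submission
  imports Defs "HOL-Computational_Algebra.Field_as_Ring"
begin

(* Perfect transfer forces G_alpha = G_T / G_S. Relative degree is additive under
   multiplication of transfer functions, so G_alpha has relative degree
   rel_deg G_T - rel_deg G_S and causality is exactly the degree condition.
   Conversely, reducing (N_T D_S) / (N_S D_T) to lowest terms gives a denominator
   dividing N_S D_T, whose roots lie in the unit disk because G_S is minimum-phase
   and G_T is stable. *)

lemma map_poly_of_real_mult:
  "map_poly complex_of_real (p * q) = map_poly complex_of_real p * map_poly complex_of_real q"
  by (rule poly_eqI) (simp add: coeff_map_poly coeff_mult)

lemma bibo_stable_mult: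
  assumes "bibo_stable N p" and "bibo_stable N' q"
  shows "bibo_stable N'' (p * q)"
  using assms by (auto simp: bibo_stable_def map_poly_of_real_mult)

lemma bibo_stable_dvd:
  assumes "D dvd D'" and "bibo_stable N' D'"
  shows "bibo_stable N D"
proof -
  obtain E where "D' = D * E" using assms(1) by (rule dvdE)
  then show ?thesis using assms(2) by (auto simp: bibo_stable_def map_poly_of_real_mult)
qed

lemma rel_deg_cross_mult:
  assumes "Na * NS * DT = NT * Da * DS"
    and "Na \<noteq> 0" "NS \<noteq> 0" "DT \<noteq> 0" "NT \<noteq> 0" "Da \<noteq> 0" "DS \<noteq> 0"
  shows "rel_deg Na Da = rel_deg NT DT - rel_deg NS DS"
proof -
  have "degree (Na * NS * DT) = degree (NT * Da * DS)" using assms(1) by simp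
  then have "degree Na + degree NS + degree DT = degree NT + degree Da + degree DS"
    using assms(2-7) by (simp add: degree_mult_eq)
  then show ?thesis by (simp add: rel_deg_def)
qed

lemma reduced_fraction_exists:
  fixes A B :: "real poly"
  assumes "B \<noteq> 0"
  obtains N D where "is_tf N D" and "D dvd B" and "N * B = A * D"
proof
  let ?g = "gcd A B"
  show "is_tf (A div ?g) (B div ?g)"
    using assms by (auto simp: is_tf_def div_gcd_coprime dvd_div_eq_0_iff)
  show "B div ?g dvd B" by (metis dvd_div_mult_self dvd_triv_left gcd_dvd2)
  show "A div ?g * B = A * (B div ?g)"
    by (simp add: div_mult_swap dvd_div_mult)
qed

theorem theorem2:
  fixes NS DS NT DT :: "real poly"
  assumes "is_tf NS DS" and "NS \<noteq> 0"
    and "is_tf NT DT" and "NT \<noteq> 0"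
    and "bibo_stable NS DS" and "bibo_stable NT DT"
    and "min_phase NS DS"
  shows "(\<exists>Na Da. is_tf Na Da \<and> causal_tf Na Da \<and> bibo_stable Na Da \<and>
             Na * NS * DT = NT * Da * DS)
         \<longleftrightarrow> rel_deg NS DS \<le> rel_deg NT DT"
proof
  have DS: "DS \<noteq> 0" and DT: "DT \<noteq> 0" using assms(1,3) by (auto simp: is_tf_def)
  assume "\<exists>Na Da. is_tf Na Da \<and> causal_tf Na Da \<and> bibo_stable Na Da \<and>
             Na * NS * DT = NT * Da * DS"
  then obtain Na Da where tf: "is_tf Na Da" and causal: "causal_tf Na Da"
    and eq: "Na * NS * DT = NT * Da * DS" by blast
  have Da: "Da \<noteq> 0" using tf by (simp add: is_tf_def)
  then have "Na \<noteq> 0" using eq DS assms(4) by auto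
  then have "rel_deg Na Da = rel_deg NT DT - rel_deg NS DS"
    using rel_deg_cross_mult[OF eq] Da DS DT assms(2,4) by simp
  then show "rel_deg NS DS \<le> rel_deg NT DT" using causal by (simp add: causal_tf_def)
next
  have DS: "DS \<noteq> 0" and DT: "DT \<noteq> 0" using assms(1,3) by (auto simp: is_tf_def)
  assume le: "rel_deg NS DS \<le> rel_deg NT DT"
  obtain Na Da where tf: "is_tf Na Da" and dvd: "Da dvd NS * DT"
    and eq: "Na * (NS * DT) = NT * DS * Da"
    using reduced_fraction_exists[of "NS * DT" "NT * DS"] DT assms(2) by auto
  have Da: "Da \<noteq> 0" using tf by (simp add: is_tf_def)
  then have "Na \<noteq> 0" using eq DS assms(4) by auto
  then have "rel_deg Na Da = rel_deg NT DT - rel_deg NS DS"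
    using rel_deg_cross_mult[of Na NS DT NT Da DS] eq Da DS DT assms(2,4) by (simp add: mult_ac)
  then have "causal_tf Na Da" using le by (simp add: causal_tf_def)
  moreover have "bibo_stable Na Da"
  proof (rule bibo_stable_dvd[OF dvd])
    show "bibo_stable NT (NS * DT)"
      using assms(6,7) by (auto simp: min_phase_def intro: bibo_stable_mult)
  qed
  ultimately show "\<exists>Na Da. is_tf Na Da \<and> causal_tf Na Da \<and> bibo_stable Na Da \<and>
             Na * NS * DT = NT * Da * DS"
    using tf eq by (metis mult.assoc mult.commute)
qed

end
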